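(* Fix $\delta>0$ and let $\Omega=\{(x,y)\in\mathbb{R}^2 : x>-1\}$. Set $\alpha(x,y)=\frac{y^2+\delta^2}{(1+x)^2}$, $\beta(x,y)=\frac{-2y}{1+x}$, and $\lambda=a+ib$ with $a(x,y)=\frac{y}{1+x}$, $b(x,y)=\frac{\delta}{1+x}$ (so $\alpha=a^2+b^2$, $\beta=-2a$). Let $(u,v)\in C^1(\Omega,\mathbb{R}^2)$ be a solution of the real first-order system $$u_x-\alpha\,v_y=0,\qquad v_x+u_y-\beta\,v_y=0.$$ Define the complex-valued function $w:=u+v\lambda=(u+av)+i\,bv$. Then $w$ satisfies the transport equation $$w_x+\lambda\,w_y=0.$$ Conversely, if $w=p+iq$ satisfies $w_x+\lambda\,w_y=0$, then $u=p-(a/b)\,q$ and $v=q/b$ satisfy the system $u_x-\alpha v_y=0$, $v_x+u_y-\beta v_y=0$.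
   Context: The spectral parameter $\lambda=\frac{y+i\delta}{1+x}$ is the root $\lambda=\frac{-\beta+i\sqrt{4\alpha-\beta^2}}{2}$ associated with the principal symbol of the system; it satisfies the conservative Burgers equation $\lambda_x+\lambda\lambda_y=0$ on $\Omega$ (this is used in the proof). The system is elliptic on all of $\Omega$ since $4\alpha-\beta^2=4\delta^2/(1+x)^2>0$. *)

theory Defs
  imports "HOL-Analysis.Analysis"
begin

definition Omega :: "(real \<times> real) set" where
  "Omega = {(x, y). x > -1}"

definition alpha :: "real \<Rightarrow> real \<times> real \<Rightarrow> real" where
  "alpha \<delta> z = ((snd z)^2 + \<delta>^2) / (1 + fst z)^2"

definition beta :: "real \<Rightarrow> real \<times> real \<Rightarrow> real" where
  "beta \<delta> z = - 2 * snd z / (1 + fst z)"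

definition acoef :: "real \<times> real \<Rightarrow> real" where
  "acoef z = snd z / (1 + fst z)"

definition bcoef :: "real \<Rightarrow> real \<times> real \<Rightarrow> real" where
  "bcoef \<delta> z = \<delta> / (1 + fst z)"

definition lam :: "real \<Rightarrow> real \<times> real \<Rightarrow> complex" where
  "lam \<delta> z = Complex (acoef z) (bcoef \<delta> z)"

definition px :: "(real \<times> real \<Rightarrow> 'a::real_normed_vector) \<Rightarrow> real \<times> real \<Rightarrow> 'a" where
  "px f z = frechet_derivative f (at z) (1, 0)"

definition py :: "(real \<times> real \<Rightarrow> 'a::real_normed_vector) \<Rightarrow> real \<times> real \<Rightarrow> 'a" where
  "py f z = frechet_derivative f (at z) (0, 1)"

definition C1_on :: "(real \<times> real) set \<Rightarrow> (real \<times> real \<Rightarrow> 'a::real_normed_vector) \<Rightarrow> bool" where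
  "C1_on S f \<longleftrightarrow> (\<forall>z\<in>S. f differentiable (at z)) \<and>
     continuous_on S (px f) \<and> continuous_on S (py f)"

end

theory Submission
  imports Defs
begin

text \<open>For \<open>w = u + v\<lambda>\<close> the product rule gives
  \<open>w\<^sub>x + \<lambda> w\<^sub>y = (u\<^sub>x - \<alpha> v\<^sub>y) + \<lambda> (v\<^sub>x + u\<^sub>y - \<beta> v\<^sub>y) + v (\<lambda>\<^sub>x + \<lambda> \<lambda>\<^sub>y) + v\<^sub>y (\<alpha> + \<beta> \<lambda> + \<lambda>\<^sup>2)\<close>,
  and the last two brackets vanish: \<open>\<lambda>\<close> solves the Burgers equation and is a root of the
  characteristic polynomial \<open>\<alpha> + \<beta> \<mu> + \<mu>\<^sup>2\<close>. As \<open>Im \<lambda> > 0\<close>, a combination \<open>p + \<lambda> q\<close> with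
  real \<open>p, q\<close> vanishes only if \<open>p = q = 0\<close>; this gives both directions, since in the converse
  the given \<open>(u, v)\<close> are just the coordinates of \<open>w\<close> in the real basis \<open>1, \<lambda>\<close>.\<close>

lemma mem_Omega_iff: "z \<in> Omega \<longleftrightarrow> fst z > -1"
  by (cases z) (simp add: Omega_def)

lemma open_Omega: "open Omega"
proof -
  have "Omega = fst -` {-1<..}"
    by (auto simp: mem_Omega_iff)
  then show ?thesis
    by (metis open_vimage_fst open_greaterThan)
qed

lemma has_derivative_real_combination:
  fixes u v :: "'a::real_normed_vector \<Rightarrow> real" and L :: "'a \<Rightarrow> complex"
  assumes "(u has_derivative u') (at z)" "(v has_derivative v') (at z)"
    and "(L has_derivative L') (at z)"
  shows "((\<lambda>x. of_real (u x) + of_real (v x) * L x) has_derivative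
          (\<lambda>h. of_real (u' h) + of_real (v' h) * L z + of_real (v z) * L' h)) (at z)"
proof -
  have "((\<lambda>x. of_real (u x) + of_real (v x) * L x) has_derivative
          (\<lambda>h. of_real (u' h) + (of_real (v z) * L' h + of_real (v' h) * L z))) (at z)"
    using assms by (intro has_derivative_add has_derivative_mult has_derivative_of_real)
  then show ?thesis
    by (simp add: ac_simps)
qed

lemma frechet_derivative_real_combination:
  fixes u v :: "'a::real_normed_vector \<Rightarrow> real" and L :: "'a \<Rightarrow> complex"
  assumes "u differentiable (at z)" "v differentiable (at z)" "L differentiable (at z)"
  shows "frechet_derivative (\<lambda>x. of_real (u x) + of_real (v x) * L x) (at z)
       = (\<lambda>h. of_real (frechet_derivative u (at z) h) + of_real (frechet_derivative v (at z) h) * L z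
              + of_real (v z) * frechet_derivative L (at z) h)"
  using has_derivative_real_combination[OF assms[unfolded frechet_derivative_works]]
  by (rule frechet_derivative_at[symmetric])

lemma transport_of_real_combination:
  fixes u v :: "real \<times> real \<Rightarrow> real" and L :: "real \<times> real \<Rightarrow> complex" and a b :: real
  assumes "u differentiable (at z)" "v differentiable (at z)" "L differentiable (at z)"
    and burgers: "px L z + L z * py L z = 0"
    and root: "of_real a + of_real b * L z + (L z)\<^sup>2 = 0"
  defines "w \<equiv> \<lambda>x. of_real (u x) + of_real (v x) * L x"
  shows "px w z + L z * py w z
       = of_real (px u z - a * py v z) + L z * of_real (px v z + py u z - b * py v z)"
proof -
  have "px w z + L z * py w z
      = of_real (px u z - a * py v z) + L z * of_real (px v z + py u z - b * py v z)
        + of_real (py v z) * (of_real a + of_real b * L z + (L z)\<^sup>2)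
        + of_real (v z) * (px L z + L z * py L z)"
    unfolding w_def px_def py_def frechet_derivative_real_combination[OF assms(1-3)]
    by (simp add: algebra_simps power2_eq_square)
  with burgers root show ?thesis
    by simp
qed

lemma of_real_add_mult_of_real_eq_0_iff:
  assumes "Im L \<noteq> 0"
  shows "of_real p + L * of_real q = 0 \<longleftrightarrow> p = 0 \<and> q = 0"
  using assms by (auto simp: complex_eq_iff)

lemma lam_eq: "lam \<delta> = (\<lambda>z. (of_real (snd z) + \<i> * of_real \<delta>) / of_real (1 + fst z))"
  by (auto simp: lam_def acoef_def bcoef_def complex_eq_iff)

lemma lam_has_derivative:
  assumes "1 + fst z \<noteq> 0"
  shows "(lam \<delta> has_derivative
           (\<lambda>h. (of_real (snd h) - of_real (fst h) * lam \<delta> z) / of_real (1 + fst z))) (at z)"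
proof -
  have "of_real (1 + fst z) \<noteq> (0 :: complex)"
    using assms by (simp only: of_real_eq_0_iff) simp
  then have "(lam \<delta> has_derivative
          (\<lambda>h. (of_real (snd h) * of_real (1 + fst z)
                 - (of_real (snd z) + \<i> * of_real \<delta>) * of_real (fst h))
               / (of_real (1 + fst z) * of_real (1 + fst z)))) (at z)"
    unfolding lam_eq by (auto intro!: derivative_eq_intros simp del: of_real_add)
  with \<open>of_real (1 + fst z) \<noteq> 0\<close> show ?thesis
    by (simp add: lam_eq diff_divide_distrib mult.commute del: of_real_add)
qed

lemma lam_differentiable: "1 + fst z \<noteq> 0 \<Longrightarrow> lam \<delta> differentiable (at z)"
  using lam_has_derivative differentiableI by blast

lemma lam_burgers:
  assumes "1 + fst z \<noteq> 0"
  shows "px (lam \<delta>) z + lam \<delta> z * py (lam \<delta>) z = 0"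
  unfolding px_def py_def frechet_derivative_at[OF lam_has_derivative[OF assms], symmetric]
  by (simp add: diff_divide_distrib)

lemma lam_characteristic_root:
  "of_real (alpha \<delta> z) + of_real (beta \<delta> z) * lam \<delta> z + (lam \<delta> z)\<^sup>2 = 0"
  by (simp add: alpha_def beta_def lam_def acoef_def bcoef_def complex_eq_iff
      power2_eq_square add_divide_distrib)

lemma Im_lam_pos:
  assumes "\<delta> > 0" "z \<in> Omega"
  shows "Im (lam \<delta> z) > 0"
  using assms by (simp add: lam_def bcoef_def mem_Omega_iff)

lemma system_imp_transport:
  fixes u v :: "real \<times> real \<Rightarrow> real"
  assumes "z \<in> Omega" "u differentiable (at z)" "v differentiable (at z)"
    and "px u z - alpha \<delta> z * py v z = 0" "px v z + py u z - beta \<delta> z * py v z = 0"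
  defines "w \<equiv> \<lambda>x. of_real (u x) + of_real (v x) * lam \<delta> x"
  shows "px w z + lam \<delta> z * py w z = 0"
proof -
  have "1 + fst z \<noteq> 0"
    using assms(1) by (simp add: mem_Omega_iff)
  have "px w z + lam \<delta> z * py w z
      = of_real (px u z - alpha \<delta> z * py v z)
        + lam \<delta> z * of_real (px v z + py u z - beta \<delta> z * py v z)"
    unfolding w_def
    using assms(2,3) lam_differentiable[OF \<open>1 + fst z \<noteq> 0\<close>]
      lam_burgers[OF \<open>1 + fst z \<noteq> 0\<close>] lam_characteristic_root
    by (rule transport_of_real_combination)
  with assms(4,5) show ?thesis
    by simp
qed

lemma differentiable_acoef: "1 + fst z \<noteq> 0 \<Longrightarrow> acoef differentiable (at z)"
  unfolding acoef_def[abs_def]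
  by (intro derivative_intros bounded_linear_imp_differentiable bounded_linear_fst
      bounded_linear_snd) simp

lemma differentiable_bcoef: "1 + fst z \<noteq> 0 \<Longrightarrow> bcoef \<delta> differentiable (at z)"
  unfolding bcoef_def[abs_def]
  by (intro derivative_intros bounded_linear_imp_differentiable bounded_linear_fst) simp

lemma real_coordinates_lam:
  assumes "bcoef \<delta> z \<noteq> 0"
  shows "of_real (Re c - acoef z / bcoef \<delta> z * Im c) + of_real (Im c / bcoef \<delta> z) * lam \<delta> z = c"
  using assms by (simp add: complex_eq_iff lam_def field_simps)

lemma transport_imp_system:
  fixes w :: "real \<times> real \<Rightarrow> complex"
  assumes "\<delta> > 0" "z \<in> Omega" "w differentiable (at z)" "px w z + lam \<delta> z * py w z = 0"
  defines "u \<equiv> \<lambda>x. Re (w x) - acoef x / bcoef \<delta> x * Im (w x)"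
    and "v \<equiv> \<lambda>x. Im (w x) / bcoef \<delta> x"
  shows "px u z - alpha \<delta> z * py v z = 0 \<and> px v z + py u z - beta \<delta> z * py v z = 0"
proof -
  have "1 + fst z \<noteq> 0"
    using assms(2) by (simp add: mem_Omega_iff)
  have "(\<lambda>x. Re (w x)) differentiable (at z)" "(\<lambda>x. Im (w x)) differentiable (at z)"
    using assms(3) has_derivative_Re has_derivative_Im unfolding differentiable_def by blast+
  moreover have "acoef differentiable (at z)" "bcoef \<delta> differentiable (at z)"
    using \<open>1 + fst z \<noteq> 0\<close> by (simp_all add: differentiable_acoef differentiable_bcoef)
  moreover have "bcoef \<delta> z \<noteq> 0"
    using \<open>1 + fst z \<noteq> 0\<close> assms(1) by (simp add: bcoef_def)
  ultimately have u: "u differentiable (at z)" and v: "v differentiable (at z)"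
    unfolding u_def v_def by (auto intro!: derivative_intros simp del: divide_divide_eq_left)
  have L: "lam \<delta> differentiable (at z)"
    using \<open>1 + fst z \<noteq> 0\<close> by (rule lam_differentiable)
  have "(\<lambda>x. of_real (u x) + of_real (v x) * lam \<delta> x) differentiable (at z)"
    using u v L unfolding differentiable_def by (blast intro: has_derivative_real_combination)
  moreover have "of_real (u x) + of_real (v x) * lam \<delta> x = w x" if "x \<in> Omega" for x
    unfolding u_def v_def
    using that assms(1) by (intro real_coordinates_lam) (simp add: bcoef_def mem_Omega_iff)
  ultimately have "frechet_derivative (\<lambda>x. of_real (u x) + of_real (v x) * lam \<delta> x) (at z)
      = frechet_derivative w (at z)"
    by (rule frechet_derivative_transform_within_open[OF _ open_Omega assms(2)])
  with assms(4) have "px (\<lambda>x. of_real (u x) + of_real (v x) * lam \<delta> x) z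
      + lam \<delta> z * py (\<lambda>x. of_real (u x) + of_real (v x) * lam \<delta> x) z = 0"
    by (simp add: px_def py_def)
  then have "of_real (px u z - alpha \<delta> z * py v z)
      + lam \<delta> z * of_real (px v z + py u z - beta \<delta> z * py v z) = 0"
    by (simp only: transport_of_real_combination[OF u v L lam_burgers[OF \<open>1 + fst z \<noteq> 0\<close>]
          lam_characteristic_root])
  moreover have "Im (lam \<delta> z) \<noteq> 0"
    using Im_lam_pos[OF assms(1,2)] by simp
  ultimately show ?thesis
    using of_real_add_mult_of_real_eq_0_iff by blast
qed

theorem proposition3p2:
  fixes \<delta> :: real
  assumes "\<delta> > 0"
  shows "(\<forall>u v :: real \<times> real \<Rightarrow> real.
            C1_on Omega u \<and> C1_on Omega v \<and>
            (\<forall>z\<in>Omega. px u z - alpha \<delta> z * py v z = 0 \<and>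
                        px v z + py u z - beta \<delta> z * py v z = 0)
          \<longrightarrow> (let w = (\<lambda>z. complex_of_real (u z) + complex_of_real (v z) * lam \<delta> z)
               in \<forall>z\<in>Omega. px w z + lam \<delta> z * py w z = 0))
       \<and> (\<forall>w :: real \<times> real \<Rightarrow> complex.
            C1_on Omega w \<and> (\<forall>z\<in>Omega. px w z + lam \<delta> z * py w z = 0)
          \<longrightarrow> (let u = (\<lambda>z. Re (w z) - acoef z / bcoef \<delta> z * Im (w z));
                   v = (\<lambda>z. Im (w z) / bcoef \<delta> z)
               in \<forall>z\<in>Omega. px u z - alpha \<delta> z * py v z = 0 \<and>
                           px v z + py u z - beta \<delta> z * py v z = 0))"
  unfolding Let_def C1_on_def
  using system_imp_transport transport_imp_system[OF assms] by blast

end
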